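(* Let the Algorithm and assumptions (A1)–(A4) be as in the context, with constants $L_H,K_H,\delta_g,\delta_H,\nu$. Suppose the algorithm does not terminate at the $N$-th iteration, and that for every iteration $k$ the parameters satisfy $\delta_g\le\frac{9\delta_H^2}{4\sigma_k}$ and \[ \delta_H\le\min\Big\{\min\{\tfrac1{18},\tfrac{1-\rho_{TH}}{9}\}\big(\sqrt{K_H^2+4\sigma_k\varepsilon_g}-K_H\big),\ \min\{\tfrac19,\tfrac{2(1-\rho_{TH})}{9}\}\nu\varepsilon_H\Big\}. \] Then $\sigma_k\le\max\{\sigma_0,2\gamma L_H\}$ for all $k=1,2,\dots,N$.
   Context: Let $\mathcal M$ be a connected complete Riemannian manifold; $\langle\cdot,\cdot\rangle$ and $\|\cdot\|$ denote the inner product and norm on tangent spaces $T_x\mathcal M$. Let $f=\frac1n\sum_{i=1}^n f_i$ with each $f_i:\mathcal M\to\mathbb R$ twice continuously differentiable; $\mathrm{grad} f$ is the Riemannian gradient. A retraction is a smooth map $R:T\mathcal M\to\mathcal M$ whose restriction $R_x$ to $T_x\mathcal M$ satisfies $R_x(0_x)=x$, $DR_x(0_x)=\mathrm{Id}$. $\nabla^2 f\circ R_x(0_x)$ is the Hessian at $0_x$ of $f\circ R_x$ on the inner-product space $T_x\mathcal M$ (a self-adjoint operator). $\lambda_{\min}(H)$ denotes the smallest eigenvalue of a self-adjoint operator $H$. Algorithm: fix $\varepsilon_g,\varepsilon_H,\rho_{TH}\in(0,1)$, $\gamma>1$, $x_0\in\mathcal M$, $\sigma_0>0$. At iteration $k$: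 construct $G_k\in T_{x_k}\mathcal M$ and self-adjoint linear $H_k$ on $T_{x_k}\mathcal M$; if $\|G_k\|\le\varepsilon_g$ and $\lambda_{\min}(H_k)\ge-\varepsilon_H$, stop (terminate at iteration $k$); otherwise choose $\eta_k\in T_{x_k}\mathcal M$ approximately minimizing $m_k(\eta):=\langle G_k,\eta\rangle+\frac12\langle H_k[\eta],\eta\rangle+\frac13\sigma_k\|\eta\|^3$, set $\rho_k=\frac{f(x_k)-f\circ R_{x_k}(\eta_k)}{-m_k(\eta_k)}$; if $\rho_k\ge\rho_{TH}$ set $x_{k+1}=R_{x_k}(\eta_k)$, $\sigma_{k+1}=\sigma_k/\gamma$, else $x_{k+1}=x_k$, $\sigma_{k+1}=\gamma\sigma_k$. Cauchy point and eigenpoint: $\eta_k^C:=-\alpha^C G_k$ with $\alpha^C\in\arg\min_{\alpha\ge0}m_k(-\alpha G_k)$. Fix $\nu\in(0,1)$. When $\lambda_{\min}(H_k)<0$, $\eta_k^E:=\alpha^E u_k$ where $u_k$ satisfies $\langle u_k,H_k[u_k]\rangle\le\nu\lambda_{\min}(H_k)\|u_k\|^2<0$ and $\langle G_k,u_k\rangle\le0$, and $\alpha^E\in\arg\min_{\alpha\ge0}m_k(\alpha u_k)$. Assumptions: (A1) there is $L_H>0$ with $\big|f\circ R_{x_k}(\eta_k)-f(x_k)-\langle\mathrm{grad} f(x_k),\eta_k\rangle-\frac12\langle\nabla^2 f\circ R_{x_k}(0_{x_k})[\eta_k],\eta_k\rangle\big|\le\frac12L_H\|\eta_k\|^3$ for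 all $k$. (A2) there is $K_H>0$ with $\|H_k\|:=\sup_{\|\eta\|\le1}\langle\eta,H_k[\eta]\rangle\le K_H$ for all $k$. (A3) there are $\delta_g,\delta_H\in(0,1)$ with $\|G_k-\mathrm{grad} f(x_k)\|\le\delta_g$ and $\|(H_k-\nabla^2 f\circ R_{x_k}(0_{x_k}))[\eta_k]\|\le\delta_H\|\eta_k\|$ for all $k$. (A4) for all $k$, $-m_k(\eta_k)\ge-m_k(\eta_k^C)$, and $-m_k(\eta_k)\ge-m_k(\eta_k^E)$ whenever $\lambda_{\min}(H_k)<0$. *)

theory Defs
  imports "HOL-Analysis.Analysis"
begin

text \<open>A tangent space T_x M is modelled by a finite-dimensional real inner product
space (a type of class euclidean_space).\<close>

definition self_adjoint :: "('v::real_inner \<Rightarrow> 'v) \<Rightarrow> bool" where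
  "self_adjoint H \<longleftrightarrow> linear H \<and> (\<forall>u v. inner (H u) v = inner u (H v))"

definition lambda_min :: "('v::real_inner \<Rightarrow> 'v) \<Rightarrow> real" where
  "lambda_min H = Inf {l. \<exists>v. v \<noteq> 0 \<and> H v = l *\<^sub>R v}"

text \<open>The operator "norm" as defined in assumption (A2).\<close>
definition op_size :: "('v::real_inner \<Rightarrow> 'v) \<Rightarrow> real" where
  "op_size H = Sup {inner e (H e) | e. norm e \<le> 1}"

definition cubic_model :: "'v::real_inner \<Rightarrow> ('v \<Rightarrow> 'v) \<Rightarrow> real \<Rightarrow> 'v \<Rightarrow> real" where
  "cubic_model G H s e = inner G e + 1/2 * inner (H e) e + s / 3 * norm e ^ 3"

end

theory Submission
  imports Defs
begin

text \<open>If \<open>\<sigma>\<^sub>k \<ge> 2 L\<^sub>H\<close>, the cubic term of the model dominates the Taylor remainder, so the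
  actual reduction falls short of the model reduction by at most
  \<open>\<delta>\<^sub>g r + \<delta>\<^sub>H r\<^sup>2/2 - \<sigma>\<^sub>k r\<^sup>3/12\<close> with \<open>r = \<parallel>\<eta>\<^sub>k\<parallel>\<close>, a quantity bounded by
  \<open>243 \<delta>\<^sub>H\<^sup>3 / (4 \<sigma>\<^sub>k\<^sup>2)\<close>. Since the algorithm has not stopped, either the gradient is
  large or the curvature is negative enough, and the Cauchy point resp. the eigenpoint
  give a model reduction that, by the choice of \<open>\<delta>\<^sub>H\<close>, is at least
  \<open>243 \<delta>\<^sub>H\<^sup>3 / (4 (1 - \<rho>\<^sub>T\<^sub>H) \<sigma>\<^sub>k\<^sup>2)\<close>. Hence every iteration with \<open>\<sigma>\<^sub>k \<ge> 2 L\<^sub>H\<close> is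
  successful, so \<open>\<sigma>\<close> only increases while it is below \<open>2 L\<^sub>H\<close>. The finite-sum
  structure of \<open>f\<close> and the retraction enter only through (A1), and self-adjointness of
  \<open>H\<^sub>k\<close> only through its linearity.\<close>

lemma inner_le_op_size:
  fixes H :: "'v::real_inner \<Rightarrow> 'v"
  assumes "bounded_linear H"
  shows "inner e (H e) \<le> op_size H * norm e ^ 2"
proof (cases "e = 0")
  case True
  then show ?thesis using assms by (simp add: linear_simps)
next
  case False
  obtain B where B: "0 < B" "\<And>x. norm (H x) \<le> norm x * B"
    using bounded_linear.pos_bounded[OF assms] by blast
  have "bdd_above {inner e (H e) | e. norm e \<le> 1}"
  proof (rule bdd_aboveI)
    fix y assume "y \<in> {inner e (H e) | e. norm e \<le> 1}"
    then obtain e where e: "y = inner e (H e)" "norm e \<le> 1" by blast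
    have "y \<le> norm e * norm (H e)" using e(1) Cauchy_Schwarz_ineq2 by (metis abs_le_D1)
    also have "\<dots> \<le> norm e * (norm e * B)" using B(2) by (rule mult_left_mono) simp
    also have "\<dots> \<le> B" using e(2) B(1) by (simp add: mult_le_one mult_left_le_one_le)
    finally show "y \<le> B" .
  qed
  moreover have "norm (e /\<^sub>R norm e) \<le> 1" using False by simp
  ultimately have "inner (e /\<^sub>R norm e) (H (e /\<^sub>R norm e)) \<le> op_size H"
    unfolding op_size_def by (intro cSup_upper) blast+
  moreover have "inner (e /\<^sub>R norm e) (H (e /\<^sub>R norm e)) = inner e (H e) / norm e ^ 2"
    using assms by (simp add: linear_simps power2_eq_square field_simps)
  ultimately show ?thesis using False by (simp add: divide_le_eq)
qed

lemma cauchy_point_decrease: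
  fixes G :: "'v::real_inner"
  assumes lin: "bounded_linear H" and K: "op_size H \<le> K" and s: "0 < s" and t: "0 \<le> t"
    and G: "G \<noteq> 0"
    and min: "\<forall>a\<ge>0. cubic_model G H s (- aC *\<^sub>R G) \<le> cubic_model G H s (- a *\<^sub>R G)"
  shows "t * norm G - K / 2 * t ^ 2 - s / 3 * t ^ 3 \<le> - cubic_model G H s (- aC *\<^sub>R G)"
proof -
  define a where "a = t / norm G"
  have a: "0 \<le> a" using t by (simp add: a_def)
  have curv: "inner G (H G) \<le> K * norm G ^ 2"
    using inner_le_op_size[OF lin, of G] K by (meson mult_right_mono order_trans zero_le_power2)
  have GG: "inner G G = norm G * norm G" by (simp flip: power2_eq_square add: power2_norm_eq_inner)
  have "cubic_model G H s (- a *\<^sub>R G)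
      = - a * norm G ^ 2 + 1/2 * a^2 * inner G (H G) + s/3 * a^3 * norm G ^ 3"
    using lin a GG by (simp add: cubic_model_def linear_simps inner_commute power2_norm_eq_inner
        power_mult_distrib algebra_simps power2_eq_square)
  also have "\<dots> \<le> - a * norm G ^ 2 + 1/2 * a^2 * (K * norm G ^ 2) + s/3 * a^3 * norm G ^ 3"
    using curv by (simp add: mult_left_mono)
  also have "\<dots> = - t * norm G + K / 2 * t ^ 2 + s / 3 * t ^ 3"
    using G by (simp add: a_def power2_eq_square power3_eq_cube field_simps)
  finally show ?thesis using min a by force
qed

lemma cauchy_point_decrease_large_gradient:
  fixes G :: "'v::real_inner"
  assumes lin: "bounded_linear H" and K: "op_size H \<le> K" "0 \<le> K" and s: "0 < s"
    and eps: "0 < eps" "eps \<le> norm G"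
    and min: "\<forall>a\<ge>0. cubic_model G H s (- aC *\<^sub>R G) \<le> cubic_model G H s (- a *\<^sub>R G)"
  shows "(sqrt (K ^ 2 + 4 * s * eps) - K) ^ 3 / (12 * s ^ 2) \<le> - cubic_model G H s (- aC *\<^sub>R G)"
proof -
  define q where "q = sqrt (K ^ 2 + 4 * s * eps)"
  define t where "t = (q - K) / (2 * s)"
  have q2: "q ^ 2 = K ^ 2 + 4 * s * eps" unfolding q_def using s eps by simp
  have "K \<le> q" unfolding q_def using s eps by (intro real_le_rsqrt) simp
  then have t: "0 \<le> t" unfolding t_def using s by simp
  have root: "s * t ^ 2 + K * t = eps"
  proof -
    have "s * t ^ 2 + K * t = (q ^ 2 - K ^ 2) / (4 * s)"
      unfolding t_def using s by (simp add: field_simps power2_eq_square)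
    then show ?thesis using q2 s by simp
  qed
  have "(q - K) ^ 3 / (12 * s ^ 2) = 2/3 * s * t ^ 3"
    unfolding t_def using s by (simp add: field_simps power3_eq_cube power2_eq_square)
  also have "\<dots> \<le> t * eps - K / 2 * t ^ 2 - s / 3 * t ^ 3"
    using K(2) by (simp flip: root add: algebra_simps power2_eq_square power3_eq_cube)
  also have "\<dots> \<le> t * norm G - K / 2 * t ^ 2 - s / 3 * t ^ 3"
    using eps t by (simp add: mult_left_mono)
  also have "\<dots> \<le> - cubic_model G H s (- aC *\<^sub>R G)"
  proof (rule cauchy_point_decrease[OF lin K(1) s t _ min])
    show "G \<noteq> 0" using eps by auto
  qed
  finally show ?thesis unfolding q_def .
qed

lemma eigenpoint_decrease:
  fixes G u :: "'v::real_inner"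
  assumes lin: "linear H" and s: "0 < s" and mu: "mu \<le> 0" and u: "u \<noteq> 0"
    and curv: "inner u (H u) \<le> mu * norm u ^ 2" and descent: "inner G u \<le> 0"
    and min: "\<forall>a\<ge>0. cubic_model G H s (aE *\<^sub>R u) \<le> cubic_model G H s (a *\<^sub>R u)"
  shows "(- mu) ^ 3 / (6 * s ^ 2) \<le> - cubic_model G H s (aE *\<^sub>R u)"
proof -
  define a where "a = - mu / (s * norm u)"
  have a: "0 \<le> a" unfolding a_def using mu s u by (intro divide_nonneg_pos) auto
  have au: "a * norm u = - mu / s" using u by (simp add: a_def)
  have "cubic_model G H s (a *\<^sub>R u)
      = a * inner G u + 1/2 * a ^ 2 * inner u (H u) + s/3 * (a * norm u) ^ 3"
    using lin a by (simp add: cubic_model_def linear_scale inner_commute power2_eq_square)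
  also have "\<dots> \<le> 1/2 * a ^ 2 * (mu * norm u ^ 2) + s/3 * (a * norm u) ^ 3"
  proof -
    have "a * inner G u \<le> 0" using a descent by (rule mult_nonneg_nonpos)
    moreover have "a ^ 2 * inner u (H u) \<le> a ^ 2 * (mu * norm u ^ 2)"
      using curv by (simp add: mult_left_mono)
    ultimately show ?thesis by simp
  qed
  also have "\<dots> = 1/2 * mu * (a * norm u) ^ 2 + s/3 * (a * norm u) ^ 3"
    by (simp add: power_mult_distrib)
  also have "\<dots> = - ((- mu) ^ 3 / (6 * s ^ 2))"
    unfolding au using s by (simp add: field_simps power2_eq_square power3_eq_cube)
  finally show ?thesis using min a by force
qed

lemma cube_le_of_le_min_mult:
  fixes d a b w :: real
  assumes "0 \<le> d" "d \<le> min a b * w" "0 \<le> w"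
  shows "d ^ 3 \<le> a ^ 2 * b * w ^ 3"
proof -
  have da: "d \<le> a * w"
    using assms(2) mult_right_mono[OF min.cobounded1 assms(3)] by (rule order_trans)
  have db: "d \<le> b * w"
    using assms(2) mult_right_mono[OF min.cobounded2 assms(3)] by (rule order_trans)
  have "d ^ 3 \<le> (a * w) * (a * w) * (b * w)"
    unfolding power3_eq_cube using assms(1) da db by (intro mult_mono) auto
  then show ?thesis by (simp add: power2_eq_square power3_eq_cube algebra_simps)
qed

lemma model_decrease_large_gradient:
  fixes G eta :: "'v::real_inner"
  assumes lin: "bounded_linear H" and K: "op_size H \<le> K" "0 \<le> K" and s: "0 < s"
    and eps: "0 < eps" "eps \<le> norm G" and rho: "rho < 1" and dH: "0 \<le> dH"
    and cauchy: "\<forall>a\<ge>0. cubic_model G H s (- aC *\<^sub>R G) \<le> cubic_model G H s (- a *\<^sub>R G)"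
    and eta_cauchy: "- cubic_model G H s eta \<ge> - cubic_model G H s (- aC *\<^sub>R G)"
    and dH_le: "dH \<le> min (1/18) ((1 - rho) / 9) * (sqrt (K ^ 2 + 4 * s * eps) - K)"
  shows "243/4 * dH ^ 3 / s ^ 2 \<le> (1 - rho) * - cubic_model G H s eta"
proof -
  define w where "w = sqrt (K ^ 2 + 4 * s * eps) - K"
  have w: "0 \<le> w" unfolding w_def using s eps by (simp add: real_le_rsqrt)
  have rho': "0 \<le> 1 - rho" using rho by simp
  have "dH ^ 3 \<le> (1/18) ^ 2 * ((1 - rho) / 9) * w ^ 3"
    using dH_le dH w unfolding w_def by (intro cube_le_of_le_min_mult) auto
  then have "243/4 * dH ^ 3 / s ^ 2 \<le> 243/4 * ((1/18) ^ 2 * ((1 - rho) / 9) * w ^ 3) / s ^ 2"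
    by (intro divide_right_mono mult_left_mono) auto
  also have "\<dots> = (1 - rho) * (w ^ 3 / (48 * s ^ 2))" using s by (simp add: field_simps)
  also have "\<dots> \<le> (1 - rho) * (w ^ 3 / (12 * s ^ 2))"
    using rho' w s by (intro mult_left_mono divide_left_mono) auto
  also have "\<dots> \<le> (1 - rho) * - cubic_model G H s eta"
    using cauchy_point_decrease_large_gradient[OF lin K s eps cauchy] eta_cauchy rho'
    unfolding w_def by (intro mult_left_mono) auto
  finally show ?thesis .
qed

lemma model_decrease_negative_curvature:
  fixes G u eta :: "'v::real_inner"
  assumes lin: "linear H" and s: "0 < s" and eps: "0 < eps" and nu: "0 < nu"
    and rho: "rho < 1" and dH: "0 \<le> dH" and lam: "lam < - eps"
    and u: "u \<noteq> 0" and curv: "inner u (H u) \<le> nu * lam * norm u ^ 2"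
    and descent: "inner G u \<le> 0"
    and eigen: "\<forall>a\<ge>0. cubic_model G H s (aE *\<^sub>R u) \<le> cubic_model G H s (a *\<^sub>R u)"
    and eta_eigen: "- cubic_model G H s eta \<ge> - cubic_model G H s (aE *\<^sub>R u)"
    and dH_le: "dH \<le> min (1/9) (2 * (1 - rho) / 9) * nu * eps"
  shows "243/4 * dH ^ 3 / s ^ 2 \<le> (1 - rho) * - cubic_model G H s eta"
proof -
  have rho': "0 \<le> 1 - rho" using rho by simp
  have "nu * eps \<le> nu * - lam" using lam nu by (intro mult_left_mono) auto
  moreover have "0 < nu * eps" using nu eps by simp
  ultimately have mu: "nu * eps \<le> - (nu * lam)" "nu * lam \<le> 0" by simp_all
  have "dH ^ 3 \<le> (1/9) ^ 2 * (2 * (1 - rho) / 9) * (nu * eps) ^ 3"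
    using dH_le dH nu eps by (intro cube_le_of_le_min_mult) (auto simp: mult.assoc)
  then have "243/4 * dH ^ 3 / s ^ 2 \<le> 243/4 * ((1/9) ^ 2 * (2 * (1 - rho) / 9) * (nu * eps) ^ 3) / s ^ 2"
    by (intro divide_right_mono mult_left_mono) auto
  also have "\<dots> = (1 - rho) * ((nu * eps) ^ 3 / (6 * s ^ 2))" using s by (simp add: field_simps)
  also have "\<dots> \<le> (1 - rho) * ((- (nu * lam)) ^ 3 / (6 * s ^ 2))"
    using rho' mu nu eps by (intro mult_left_mono divide_right_mono power_mono) auto
  also have "\<dots> \<le> (1 - rho) * - cubic_model G H s (aE *\<^sub>R u)"
    using eigenpoint_decrease[OF lin s mu(2) u curv descent eigen] rho' by (rule mult_left_mono)
  also have "\<dots> \<le> (1 - rho) * - cubic_model G H s eta"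
    using eta_eigen rho' by (rule mult_left_mono)
  finally show ?thesis .
qed

lemma model_decrease_lower_bound:
  fixes G u eta :: "'v::real_inner"
  assumes lin: "bounded_linear H" and K: "op_size H \<le> K" "0 \<le> K" and s: "0 < s"
    and eps: "0 < eps_g" "0 < eps_H" and nu: "0 < nu" and rho: "rho < 1" and dH: "0 \<le> dH"
    and no_stop: "\<not> (norm G \<le> eps_g \<and> lambda_min H \<ge> - eps_H)"
    and cauchy: "\<forall>a\<ge>0. cubic_model G H s (- aC *\<^sub>R G) \<le> cubic_model G H s (- a *\<^sub>R G)"
    and eigen: "lambda_min H < 0 \<Longrightarrow> inner u (H u) \<le> nu * lambda_min H * norm u ^ 2
        \<and> nu * lambda_min H * norm u ^ 2 < 0 \<and> inner G u \<le> 0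
        \<and> (\<forall>a\<ge>0. cubic_model G H s (aE *\<^sub>R u) \<le> cubic_model G H s (a *\<^sub>R u))"
    and eta_cauchy: "- cubic_model G H s eta \<ge> - cubic_model G H s (- aC *\<^sub>R G)"
    and eta_eigen: "lambda_min H < 0 \<Longrightarrow> - cubic_model G H s eta \<ge> - cubic_model G H s (aE *\<^sub>R u)"
    and dH_le: "dH \<le> min (min (1/18) ((1 - rho) / 9) * (sqrt (K ^ 2 + 4 * s * eps_g) - K))
        (min (1/9) (2 * (1 - rho) / 9) * nu * eps_H)"
  shows "243/4 * dH ^ 3 / s ^ 2 \<le> (1 - rho) * - cubic_model G H s eta"
proof -
  from no_stop consider (gradient) "eps_g \<le> norm G" | (curvature) "lambda_min H < - eps_H"
    by linarith
  then show ?thesis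
  proof cases
    case gradient
    with dH_le show ?thesis
      by (intro model_decrease_large_gradient[OF lin K s eps(1) gradient rho dH cauchy eta_cauchy])
        simp
  next
    case curvature
    then have neg: "lambda_min H < 0" using eps by linarith
    with eigen have "u \<noteq> 0" by auto
    with curvature eigen[OF neg] eta_eigen[OF neg] dH_le show ?thesis
      by (intro model_decrease_negative_curvature[OF bounded_linear.linear[OF lin] s eps(2) nu rho dH])
        auto
  qed
qed

lemma predicted_minus_actual_reduction_le:
  fixes g G h eta :: "'v::real_inner"
  assumes taylor: "\<bar>f1 - f0 - inner g eta - 1/2 * inner h eta\<bar> \<le> 1/2 * L * norm eta ^ 3"
    and grad_err: "norm (G - g) \<le> dg" and hess_err: "norm (H eta - h) \<le> dH * norm eta"
    and s: "2 * L \<le> s"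
  shows "f1 - f0 - cubic_model G H s eta
    \<le> dg * norm eta + 1/2 * dH * norm eta ^ 2 - s / 12 * norm eta ^ 3"
proof -
  have "inner (g - G) eta \<le> norm (g - G) * norm eta"
    by (metis Cauchy_Schwarz_ineq2 abs_le_D1)
  also have "\<dots> \<le> dg * norm eta"
    using grad_err by (simp add: norm_minus_commute mult_right_mono)
  finally have grad_term: "inner (g - G) eta \<le> dg * norm eta" .
  have "inner (h - H eta) eta \<le> norm (h - H eta) * norm eta"
    by (metis Cauchy_Schwarz_ineq2 abs_le_D1)
  also have "\<dots> \<le> dH * norm eta ^ 2"
    using mult_right_mono[OF hess_err norm_ge_zero[of eta]]
    by (simp add: norm_minus_commute power2_eq_square mult.assoc)
  finally have hess_term: "inner (h - H eta) eta \<le> dH * norm eta ^ 2" .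
  have "1/2 * L * norm eta ^ 3 \<le> s / 4 * norm eta ^ 3"
    using s by (intro mult_right_mono) auto
  then show ?thesis
    using abs_le_D1[OF taylor] grad_term hess_term unfolding cubic_model_def by (simp add: inner_diff_left)
qed

lemma cubic_error_le:
  fixes s dg dH r :: real
  assumes s: "0 < s" and dH: "0 \<le> dH" and dg: "dg \<le> 9 * dH ^ 2 / (4 * s)" and r: "0 \<le> r"
  shows "dg * r + 1/2 * dH * r ^ 2 - s / 12 * r ^ 3 \<le> 243/4 * dH ^ 3 / s ^ 2"
proof -
  have dg_s: "dg * s \<le> 9/4 * dH ^ 2" using dg s by (simp add: field_simps)
  show ?thesis
  proof (cases "9 * dH \<le> s * r")
    case True
    have "(dg * r) * s = (dg * s) * r" by simp
    also have "\<dots> \<le> (9/4 * dH ^ 2) * r" using dg_s r by (rule mult_right_mono)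
    also have "\<dots> = (1/4 * dH * r) * (9 * dH)" by (simp add: power2_eq_square)
    also have "\<dots> \<le> (1/4 * dH * r) * (s * r)" using True dH r by (intro mult_left_mono) auto
    also have "\<dots> = (1/4 * dH * r ^ 2) * s" by (simp add: power2_eq_square)
    finally have "dg * r \<le> 1/4 * dH * r ^ 2" using s by (simp only: mult_le_cancel_right_pos)
    moreover have "3/4 * dH * r ^ 2 \<le> s / 12 * r ^ 3"
      using mult_right_mono[OF True, of "r ^ 2 / 12"] r by (simp add: power2_eq_square power3_eq_cube)
    moreover have "0 \<le> 243/4 * dH ^ 3 / s ^ 2" using dH by simp
    ultimately show ?thesis by linarith
  next
    case False
    then have sr: "s * r \<le> 9 * dH" by simp
    have "dg * r * s ^ 2 \<le> 9/4 * dH ^ 2 * (9 * dH)"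
      using mult_mono[OF dg_s sr] s r dH by (simp add: power2_eq_square algebra_simps)
    then have "dg * r \<le> 81/4 * dH ^ 3 / s ^ 2" using s by (simp add: field_simps power3_eq_cube power2_eq_square)
    moreover have "dH * (s * r) ^ 2 \<le> dH * (9 * dH) ^ 2"
      using sr s r dH by (intro mult_left_mono power_mono) auto
    then have "1/2 * dH * r ^ 2 \<le> 81/2 * dH ^ 3 / s ^ 2"
      using s by (simp add: field_simps power3_eq_cube power2_eq_square)
    moreover have "0 \<le> s / 12 * r ^ 3" using s r by simp
    ultimately show ?thesis by linarith
  qed
qed

lemma ratio_ge_if_error_le:
  fixes rho c D f0 f1 :: real
  assumes c: "0 < c" and rho: "rho < 1"
    and model: "c \<le> (1 - rho) * D" and error: "f1 - f0 + D \<le> c"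
  shows "rho \<le> (f0 - f1) / D"
proof -
  have "0 < (1 - rho) * D" using c model by linarith
  then have D: "0 < D" by (rule zero_less_mult_pos) (use rho in simp)
  have "rho * D \<le> f0 - f1" using model error by (simp add: algebra_simps)
  then show ?thesis by (subst pos_le_divide_eq[OF D])
qed

lemma le_max_if_increase_only_below:
  fixes sigma :: "nat \<Rightarrow> real"
  assumes "0 \<le> sigma 0" "1 \<le> gamma"
    and step: "\<And>k. k < N \<Longrightarrow>
      sigma (Suc k) = sigma k / gamma \<or> (sigma k < T \<and> sigma (Suc k) = gamma * sigma k)"
    and "k \<le> N"
  shows "sigma k \<le> max (sigma 0) (gamma * T)"
proof -
  have "0 \<le> sigma k \<and> sigma k \<le> max (sigma 0) (gamma * T)" using \<open>k \<le> N\<close>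
  proof (induction k)
    case 0
    then show ?case using assms(1) by simp
  next
    case (Suc k)
    then have IH: "0 \<le> sigma k" "sigma k \<le> max (sigma 0) (gamma * T)" by simp_all
    from step[of k] Suc.prems consider
        (decrease) "sigma (Suc k) = sigma k / gamma"
      | (increase) "sigma k < T" "sigma (Suc k) = gamma * sigma k"
      by force
    then show ?case
    proof cases
      case decrease
      have "sigma k / gamma \<le> sigma k"
        using mult_left_mono[OF assms(2) IH(1)] assms(2) by (simp add: divide_le_eq)
      then show ?thesis using decrease IH assms(2) by simp
    next
      case increase
      have "sigma (Suc k) \<le> gamma * T" using increase assms(2) by simp
      moreover have "0 \<le> sigma (Suc k)" using increase(2) IH(1) assms(2) by simp
      ultimately show ?thesis by simp
    qed
  qed
  then show ?thesis ..
qed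

theorem lemma3p7:
  fixes fi :: "nat \<Rightarrow> 'm \<Rightarrow> real" and n :: nat and f :: "'m \<Rightarrow> real"
    and R :: "'m \<Rightarrow> 'v::euclidean_space \<Rightarrow> 'm"
    and gR :: "'m \<Rightarrow> 'v \<Rightarrow> 'v" and Hs :: "'m \<Rightarrow> 'v \<Rightarrow> 'v"
    and x :: "nat \<Rightarrow> 'm" and sigma :: "nat \<Rightarrow> real"
    and G :: "nat \<Rightarrow> 'v" and H :: "nat \<Rightarrow> 'v \<Rightarrow> 'v" and eta :: "nat \<Rightarrow> 'v"
    and alphaC alphaE :: "nat \<Rightarrow> real" and u :: "nat \<Rightarrow> 'v"
    and eps_g eps_H rho_TH gamma nu L_H K_H delta_g delta_H :: real
    and N :: nat
  assumes n_pos: "n > 0"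
    and f_avg: "f = (\<lambda>y. (\<Sum>i<n. fi i y) / real n)"
    and retr0: "\<And>y. R y 0 = y"
    and grad: "\<And>y v. ((\<lambda>w. f (R y w)) has_derivative (\<lambda>h. inner (gR y v) h)) (at v)"
    and hess: "\<And>y. (gR y has_derivative Hs y) (at 0)"
    and eps: "0 < eps_g" "eps_g < 1" "0 < eps_H" "eps_H < 1"
    and rho: "0 < rho_TH" "rho_TH < 1"
    and gam: "gamma > 1"
    and sig0: "sigma 0 > 0"
    and nu: "0 < nu" "nu < 1"
    and cst: "L_H > 0" "K_H > 0" "0 < delta_g" "delta_g < 1" "0 < delta_H" "delta_H < 1"
    and H_sa: "\<And>k. k \<le> N \<Longrightarrow> self_adjoint (H k)"
    and no_stop: "\<And>k. k \<le> N \<Longrightarrow> \<not> (norm (G k) \<le> eps_g \<and> lambda_min (H k) \<ge> - eps_H)"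
    and update: "\<And>k. k < N \<Longrightarrow>
        (if (f (x k) - f (R (x k) (eta k))) / (- cubic_model (G k) (H k) (sigma k) (eta k)) \<ge> rho_TH
         then x (Suc k) = R (x k) (eta k) \<and> sigma (Suc k) = sigma k / gamma
         else x (Suc k) = x k \<and> sigma (Suc k) = gamma * sigma k)"
    and A1: "\<And>k. k \<le> N \<Longrightarrow>
        \<bar>f (R (x k) (eta k)) - f (x k) - inner (gR (x k) 0) (eta k)
          - 1/2 * inner (Hs (x k) (eta k)) (eta k)\<bar> \<le> 1/2 * L_H * norm (eta k) ^ 3"
    and A2: "\<And>k. k \<le> N \<Longrightarrow> op_size (H k) \<le> K_H"
    and A3g: "\<And>k. k \<le> N \<Longrightarrow> norm (G k - gR (x k) 0) \<le> delta_g"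
    and A3H: "\<And>k. k \<le> N \<Longrightarrow> norm (H k (eta k) - Hs (x k) (eta k)) \<le> delta_H * norm (eta k)"
    and cauchy: "\<And>k. k \<le> N \<Longrightarrow> alphaC k \<ge> 0 \<and>
        (\<forall>a\<ge>0. cubic_model (G k) (H k) (sigma k) (- alphaC k *\<^sub>R G k)
               \<le> cubic_model (G k) (H k) (sigma k) (- a *\<^sub>R G k))"
    and eigen: "\<And>k. k \<le> N \<Longrightarrow> lambda_min (H k) < 0 \<Longrightarrow>
        inner (u k) (H k (u k)) \<le> nu * lambda_min (H k) * norm (u k) ^ 2
        \<and> nu * lambda_min (H k) * norm (u k) ^ 2 < 0
        \<and> inner (G k) (u k) \<le> 0 \<and> alphaE k \<ge> 0 \<and>
        (\<forall>a\<ge>0. cubic_model (G k) (H k) (sigma k) (alphaE k *\<^sub>R u k)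
               \<le> cubic_model (G k) (H k) (sigma k) (a *\<^sub>R u k))"
    and A4C: "\<And>k. k \<le> N \<Longrightarrow>
        - cubic_model (G k) (H k) (sigma k) (eta k)
          \<ge> - cubic_model (G k) (H k) (sigma k) (- alphaC k *\<^sub>R G k)"
    and A4E: "\<And>k. k \<le> N \<Longrightarrow> lambda_min (H k) < 0 \<Longrightarrow>
        - cubic_model (G k) (H k) (sigma k) (eta k)
          \<ge> - cubic_model (G k) (H k) (sigma k) (alphaE k *\<^sub>R u k)"
    and par_g: "\<And>k. k \<le> N \<Longrightarrow> delta_g \<le> 9 * delta_H ^ 2 / (4 * sigma k)"
    and par_H: "\<And>k. k \<le> N \<Longrightarrow> delta_H \<le> min
        (min (1/18) ((1 - rho_TH) / 9) * (sqrt (K_H ^ 2 + 4 * sigma k * eps_g) - K_H))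
        (min (1/9) (2 * (1 - rho_TH) / 9) * nu * eps_H)"
  shows "\<forall>k\<in>{1..N}. sigma k \<le> max (sigma 0) (2 * gamma * L_H)"
proof -
  have successful: "rho_TH
      \<le> (f (x k) - f (R (x k) (eta k))) / (- cubic_model (G k) (H k) (sigma k) (eta k))"
    if k: "k \<le> N" and large: "2 * L_H \<le> sigma k" for k
  proof -
    let ?D = "- cubic_model (G k) (H k) (sigma k) (eta k)"
    have s: "0 < sigma k" using large cst(1) by linarith
    have lin: "bounded_linear (H k)"
      using H_sa[OF k] by (simp add: self_adjoint_def linear_conv_bounded_linear)
    have model: "243/4 * delta_H ^ 3 / sigma k ^ 2 \<le> (1 - rho_TH) * ?D"
      using eigen[OF k] cst
      by (intro model_decrease_lower_bound[OF lin A2[OF k] _ s eps(1,3) nu(1) rho(2) _ no_stop[OF k]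
            conjunct2[OF cauchy[OF k]] _ A4C[OF k] A4E[OF k] par_H[OF k]]) auto
    have actual: "f (R (x k) (eta k)) - f (x k) + ?D \<le> 243/4 * delta_H ^ 3 / sigma k ^ 2"
      using order_trans[OF
          predicted_minus_actual_reduction_le[where H = "H k", OF A1[OF k] A3g[OF k] A3H[OF k] large]
          cubic_error_le[OF s less_imp_le[OF cst(5)] par_g[OF k] norm_ge_zero]]
      by simp
    show ?thesis
      by (rule ratio_ge_if_error_le[OF _ rho(2) model actual]) (use cst(5) s in simp)
  qed
  have "sigma k \<le> max (sigma 0) (gamma * (2 * L_H))" if "k \<le> N" for k
  proof (rule le_max_if_increase_only_below[where sigma = sigma,
        OF less_imp_le[OF sig0] less_imp_le[OF gam] _ that])
    fix j assume "j < N"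
    then show "sigma (Suc j) = sigma j / gamma
        \<or> (sigma j < 2 * L_H \<and> sigma (Suc j) = gamma * sigma j)"
      using update[of j] successful[of j] by (auto split: if_splits)
  qed
  then show ?thesis by (auto simp: ac_simps)
qed

end
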